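(* Consider the relay problem with $K=2$ slots and message size $B>0$, where the SNR vectors $\boldsymbol\gamma_1=(\gamma^{SR}_1,\gamma^{SD}_1,\gamma^{RD}_1)$ and $\boldsymbol\gamma_2$ are independent with a.s. positive entries. Consider the causal policy: in slot 1 the source transmits with power $p_1=I^{-1}(B)/\max\{\gamma^{SD}_1,\gamma^{SR}_1\}$; if $\gamma^{SD}_1\ge\gamma^{SR}_1$ transmission ends ($p_2=0$); if $\gamma^{SD}_1<\gamma^{SR}_1$, then in slot 2 the node with the larger SNR to the destination transmits with power $p_2=I^{-1}(B-R^{th})/\tilde\gamma_2$, where $R^{th}=I\big(I^{-1}(B)\gamma^{SD}_1/\gamma^{SR}_1\big)$. This policy is feasible (the destination accumulates mutual information at least $B$) and its expected sum energy satisfies $\mathbb{E}[p_1+p_2]\le I^{-1}(B)\Big(\mathbb{E}\Big[\frac{1}{\max\{\gamma^{SD}_1,\gamma^{SR}_1\}}\Big]+\mathbb{E}\Big[\frac{1}{\max\{\gamma^{SD}_2,\gamma^{RD}_2\}}\Big]\Big).$ In particular, if all link SNRs are i.i.d. across links and slots, the expected sum energy is at most $2I^{-1}(B)\,\mathbb{E}[1/\max(\gamma',\gamma'')]$ for independent copies $\gamma',\gamma''$ of a link SNR.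
   Context: Notation: $I(x)=\log(1+x)$, $I^{-1}(x)=e^x-1$, $\tilde\gamma_k=\max(\gamma^{SD}_k,\gamma^{RD}_k)$. In the relay problem, the relay decodes after slot 1 if $I(p_1\gamma^{SR}_1)\ge B$; the destination's accumulated mutual information is $I(p_1\gamma^{SD}_1)$ after slot 1 and, if the relay has decoded, additionally $I(p_2\tilde\gamma_2)$ in slot 2 (otherwise $I(p_2\gamma^{SD}_2)$); the message is delivered if the destination's total is at least $B$. *)

theory Defs
  imports "HOL-Probability.Probability"
begin

definition I :: "real \<Rightarrow> real" where "I x = ln (1 + x)"
definition Iinv :: "real \<Rightarrow> real" where "Iinv x = exp x - 1"

definition pol_p1 :: "real \<Rightarrow> real \<Rightarrow> real \<Rightarrow> real" where
  "pol_p1 B gSR1 gSD1 = Iinv B / max gSD1 gSR1"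

definition R_th :: "real \<Rightarrow> real \<Rightarrow> real \<Rightarrow> real" where
  "R_th B gSR1 gSD1 = I (Iinv B * gSD1 / gSR1)"

definition pol_p2 :: "real \<Rightarrow> real \<Rightarrow> real \<Rightarrow> real \<Rightarrow> real \<Rightarrow> real" where
  "pol_p2 B gSR1 gSD1 gSD2 gRD2 =
     (if gSD1 \<ge> gSR1 then 0
      else Iinv (B - R_th B gSR1 gSD1) / max gSD2 gRD2)"

text \<open>Delivery of the message for powers p1, p2 in the two-slot relay problem:
  the relay decodes after slot 1 iff I(p1 gSR1) \<ge> B; the destination accumulates
  I(p1 gSD1) in slot 1 and I(p2 max(gSD2,gRD2)) in slot 2 if the relay decoded,
  otherwise I(p2 gSD2).\<close>
definition delivered :: "real \<Rightarrow> real \<Rightarrow> real \<Rightarrow> real \<Rightarrow> real \<Rightarrow> real \<Rightarrow> real \<Rightarrow> real \<Rightarrow> real \<Rightarrow> bool" where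
  "delivered B p1 p2 gSR1 gSD1 gRD1 gSR2 gSD2 gRD2 \<longleftrightarrow>
     I (p1 * gSD1) +
       (if I (p1 * gSR1) \<ge> B then I (p2 * max gSD2 gRD2) else I (p2 * gSD2)) \<ge> B"

end

theory Submission
  imports Defs
begin

(* Everything about the causal policy is a pointwise statement
   about positive SNR values a = gSR1, b = gSD1, c = gSD2, d = gRD2:
   (1) the policy delivers: if b >= a, slot 1 alone gives the destination
       I(Iinv B) = B; otherwise slot 1 gives the relay exactly B (so it
       decodes) and the destination R_th, and slot 2 tops this up by
       I(Iinv (B - R_th)) = B - R_th;
   (2) p1 = Iinv B / max b a and, since R_th >= 0, p2 <= Iinv B / max c d.
   Integrating (2) almost everywhere and using linearity of the
   nonnegative integral gives the expected-energy bound; no independence is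
   needed for it.  For the i.i.d. corollary, independence of the six link
   SNRs makes (SD1, SR1) and (SD2, RD2) independent pairs with common marginal
   distribution P, so both expectations equal the integral of
   1 / max over P x P. *)

lemma I_Iinv [simp]: "I (Iinv x) = x"
  by (simp add: I_def Iinv_def)

lemma Iinv_pos: "B > 0 \<Longrightarrow> Iinv B > 0"
  by (simp add: Iinv_def)

lemma Iinv_mono: "x \<le> y \<Longrightarrow> Iinv x \<le> Iinv y"
  by (simp add: Iinv_def)

lemma R_th_nonneg:
  assumes "B > 0" "0 < a" "0 < b"
  shows "R_th B a b \<ge> 0"
  using Iinv_pos[OF assms(1)] assms unfolding R_th_def I_def by simp

lemma policy_delivers:
  assumes "B > 0" "0 < a" "0 < b" "0 < c" "0 < d"
  shows "delivered B (pol_p1 B a b) (pol_p2 B a b c d) a b e f c d"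
proof (cases "b \<ge> a")
  case True
  then have "I (pol_p1 B a b * b) = B"
    using assms by (simp add: pol_p1_def max_def)
  moreover have "pol_p2 B a b c d = 0"
    using True by (simp add: pol_p2_def)
  ultimately show ?thesis
    by (simp add: delivered_def I_def)
next
  case False
  then have relay_decodes: "I (pol_p1 B a b * a) = B"
    using assms by (simp add: pol_p1_def max_def)
  have slot1: "I (pol_p1 B a b * b) = R_th B a b"
    using False assms by (simp add: pol_p1_def R_th_def max_def)
  have "pol_p2 B a b c d * max c d = Iinv (B - R_th B a b)"
    using False assms by (simp add: pol_p2_def)
  then have slot2: "I (pol_p2 B a b c d * max c d) = B - R_th B a b"
    by simp
  show ?thesis
    using relay_decodes slot1 slot2 by (simp add: delivered_def)
qed

lemma policy_energy_bound:
  assumes "B > 0" "0 < a" "0 < b" "0 < c" "0 < d"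
  shows "pol_p1 B a b + pol_p2 B a b c d \<le> Iinv B / max b a + Iinv B / max c d"
proof -
  have "pol_p2 B a b c d \<le> Iinv B / max c d"
  proof (cases "b \<ge> a")
    case True
    then show ?thesis
      using Iinv_pos[OF assms(1)] assms by (simp add: pol_p2_def)
  next
    case False
    have "Iinv (B - R_th B a b) \<le> Iinv B"
      using R_th_nonneg[OF assms(1-3)] by (intro Iinv_mono) simp
    then show ?thesis
      using False assms by (simp add: pol_p2_def divide_right_mono)
  qed
  then show ?thesis
    by (simp add: pol_p1_def)
qed

lemma policy_energy_bound_ennreal:
  assumes "B > 0" "0 < a" "0 < b" "0 < c" "0 < d"
  shows "ennreal (pol_p1 B a b + pol_p2 B a b c d)
           \<le> ennreal (Iinv B) * ennreal (1 / max b a) + ennreal (Iinv B) * ennreal (1 / max c d)"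
proof -
  have "ennreal (pol_p1 B a b + pol_p2 B a b c d)
          \<le> ennreal (Iinv B * (1 / max b a) + Iinv B * (1 / max c d))"
    using policy_energy_bound[OF assms] by (intro ennreal_leI) simp
  also have "\<dots> = ennreal (Iinv B) * ennreal (1 / max b a) + ennreal (Iinv B) * ennreal (1 / max c d)"
    using Iinv_pos[OF assms(1)] assms
    by (simp add: ennreal_plus divide_nonneg_pos ennreal_mult[symmetric])
  finally show ?thesis .
qed

lemma policy_expected_energy:
  assumes "B > 0"
    and [measurable]: "SR1 \<in> borel_measurable M" "SD1 \<in> borel_measurable M"
      "SD2 \<in> borel_measurable M" "RD2 \<in> borel_measurable M"
    and pos: "AE \<omega> in M. 0 < SR1 \<omega> \<and> 0 < SD1 \<omega> \<and> 0 < SD2 \<omega> \<and> 0 < RD2 \<omega>"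
  shows "(\<integral>\<^sup>+ \<omega>. ennreal (pol_p1 B (SR1 \<omega>) (SD1 \<omega>)
                     + pol_p2 B (SR1 \<omega>) (SD1 \<omega>) (SD2 \<omega>) (RD2 \<omega>)) \<partial>M)
         \<le> ennreal (Iinv B) *
            ((\<integral>\<^sup>+ \<omega>. ennreal (1 / max (SD1 \<omega>) (SR1 \<omega>)) \<partial>M)
             + (\<integral>\<^sup>+ \<omega>. ennreal (1 / max (SD2 \<omega>) (RD2 \<omega>)) \<partial>M))"
proof -
  have "(\<integral>\<^sup>+ \<omega>. ennreal (pol_p1 B (SR1 \<omega>) (SD1 \<omega>)
                     + pol_p2 B (SR1 \<omega>) (SD1 \<omega>) (SD2 \<omega>) (RD2 \<omega>)) \<partial>M)
        \<le> (\<integral>\<^sup>+ \<omega>. ennreal (Iinv B) * ennreal (1 / max (SD1 \<omega>) (SR1 \<omega>))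
                   + ennreal (Iinv B) * ennreal (1 / max (SD2 \<omega>) (RD2 \<omega>)) \<partial>M)"
    using pos by (intro nn_integral_mono_AE, eventually_elim)
      (intro policy_energy_bound_ennreal[OF assms(1)], auto)
  also have "\<dots> = ennreal (Iinv B) *
            ((\<integral>\<^sup>+ \<omega>. ennreal (1 / max (SD1 \<omega>) (SR1 \<omega>)) \<partial>M)
             + (\<integral>\<^sup>+ \<omega>. ennreal (1 / max (SD2 \<omega>) (RD2 \<omega>)) \<partial>M))"
    by (simp add: nn_integral_add nn_integral_cmult distrib_left)
  finally show ?thesis .
qed

lemma (in prob_space) indep_var_from_indep_vars:
  assumes ind: "indep_vars (\<lambda>_. borel) X K"
    and "i \<in> K" "j \<in> K" "i \<noteq> j"
  shows "indep_var borel (X i) borel (X j)"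
proof -
  have "indep_var (PiM {i} (\<lambda>_. borel)) (\<lambda>\<omega>. restrict (\<lambda>k. X k \<omega>) {i})
                  (PiM {j} (\<lambda>_. borel)) (\<lambda>\<omega>. restrict (\<lambda>k. X k \<omega>) {j})"
    using assms by (intro indep_var_restrict[OF ind]) auto
  from indep_var_compose[OF this measurable_component_singleton[of i "{i}" "\<lambda>_. borel"]
      measurable_component_singleton[of j "{j}" "\<lambda>_. borel"]]
  show ?thesis
    by (simp add: comp_def)
qed

lemma (in prob_space) nn_integral_indep_pair:
  fixes X Y :: "'a \<Rightarrow> real" and f :: "real \<times> real \<Rightarrow> ennreal"
  assumes ind: "indep_var borel X borel Y"
    and dX: "distr M borel X = P" and dY: "distr M borel Y = P"
    and [measurable]: "f \<in> borel_measurable (borel \<Otimes>\<^sub>M borel)"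
  shows "(\<integral>\<^sup>+ \<omega>. f (X \<omega>, Y \<omega>) \<partial>M) = (\<integral>\<^sup>+ z. f z \<partial>(P \<Otimes>\<^sub>M P))"
proof -
  from ind have [measurable]: "X \<in> borel_measurable M" "Y \<in> borel_measurable M"
    and joint: "distr M borel X \<Otimes>\<^sub>M distr M borel Y
                  = distr M (borel \<Otimes>\<^sub>M borel) (\<lambda>\<omega>. (X \<omega>, Y \<omega>))"
    unfolding indep_var_distribution_eq by auto
  have "(\<integral>\<^sup>+ z. f z \<partial>(P \<Otimes>\<^sub>M P))
          = (\<integral>\<^sup>+ z. f z \<partial>distr M (borel \<Otimes>\<^sub>M borel) (\<lambda>\<omega>. (X \<omega>, Y \<omega>)))"
    using joint dX dY by simp
  also have "\<dots> = (\<integral>\<^sup>+ \<omega>. f (X \<omega>, Y \<omega>) \<partial>M)"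
    by (intro nn_integral_distr) measurable
  finally show ?thesis by simp
qed

theorem mainTheorem10:
  fixes M :: "'a measure" and B :: real
    and SR1 SD1 RD1 SR2 SD2 RD2 :: "'a \<Rightarrow> real"
  assumes "prob_space M"
    and "B > 0"
    and "\<forall>X \<in> {SR1, SD1, RD1, SR2, SD2, RD2}. X \<in> borel_measurable M"
    and "prob_space.indep_var M borel (\<lambda>\<omega>. (SR1 \<omega>, SD1 \<omega>, RD1 \<omega>))
                                borel (\<lambda>\<omega>. (SR2 \<omega>, SD2 \<omega>, RD2 \<omega>))"
    and "AE \<omega> in M. 0 < SR1 \<omega> \<and> 0 < SD1 \<omega> \<and> 0 < RD1 \<omega> \<and>
                     0 < SR2 \<omega> \<and> 0 < SD2 \<omega> \<and> 0 < RD2 \<omega>"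
  shows "(AE \<omega> in M. delivered B (pol_p1 B (SR1 \<omega>) (SD1 \<omega>))
                           (pol_p2 B (SR1 \<omega>) (SD1 \<omega>) (SD2 \<omega>) (RD2 \<omega>))
                           (SR1 \<omega>) (SD1 \<omega>) (RD1 \<omega>) (SR2 \<omega>) (SD2 \<omega>) (RD2 \<omega>))
       \<and> (\<integral>\<^sup>+ \<omega>. ennreal (pol_p1 B (SR1 \<omega>) (SD1 \<omega>)
                           + pol_p2 B (SR1 \<omega>) (SD1 \<omega>) (SD2 \<omega>) (RD2 \<omega>)) \<partial>M)
           \<le> ennreal (Iinv B) *
              ((\<integral>\<^sup>+ \<omega>. ennreal (1 / max (SD1 \<omega>) (SR1 \<omega>)) \<partial>M)
               + (\<integral>\<^sup>+ \<omega>. ennreal (1 / max (SD2 \<omega>) (RD2 \<omega>)) \<partial>M))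
       \<and> ((prob_space.indep_vars M (\<lambda>_. borel) (\<lambda>i. [SR1, SD1, RD1, SR2, SD2, RD2] ! i) {..<6}
            \<and> (\<forall>i<6. distr M borel ([SR1, SD1, RD1, SR2, SD2, RD2] ! i) = distr M borel SR1))
          \<longrightarrow> (\<integral>\<^sup>+ \<omega>. ennreal (pol_p1 B (SR1 \<omega>) (SD1 \<omega>)
                           + pol_p2 B (SR1 \<omega>) (SD1 \<omega>) (SD2 \<omega>) (RD2 \<omega>)) \<partial>M)
              \<le> 2 * ennreal (Iinv B) *
                 (\<integral>\<^sup>+ z. ennreal (1 / max (fst z) (snd z))
                    \<partial>(distr M borel SR1 \<Otimes>\<^sub>M distr M borel SR1)))"
  (is "?delivered \<and> ?energy \<and> (?iid \<longrightarrow> ?iid_energy)")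
proof -
  interpret prob_space M by fact
  have ?delivered
    using assms(5) by eventually_elim (intro policy_delivers assms(2), auto)
  moreover have ?energy
    using assms(3,5) by (intro policy_expected_energy assms(2)) (auto elim: eventually_mono)
  moreover have "?iid \<longrightarrow> ?iid_energy"
  proof
    assume iid: ?iid
    let ?P = "distr M borel SR1"
    let ?J = "\<integral>\<^sup>+ z. ennreal (1 / max (fst z) (snd z)) \<partial>(?P \<Otimes>\<^sub>M ?P)"
    have ind: "indep_var borel SD1 borel SR1" "indep_var borel SD2 borel RD2"
      using indep_var_from_indep_vars[OF conjunct1[OF iid], of 1 0]
        indep_var_from_indep_vars[OF conjunct1[OF iid], of 4 5] by simp_all
    have distr: "distr M borel SD1 = ?P" "distr M borel SD2 = ?P" "distr M borel RD2 = ?P"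
      using conjunct2[OF iid] by (auto dest: spec[of _ 1] spec[of _ 4] spec[of _ 5])
    have inv_max: "(\<lambda>z::real \<times> real. ennreal (1 / max (fst z) (snd z)))
                     \<in> borel_measurable (borel \<Otimes>\<^sub>M borel)"
      by measurable
    have "(\<integral>\<^sup>+ \<omega>. ennreal (1 / max (SD1 \<omega>) (SR1 \<omega>)) \<partial>M) = ?J"
         "(\<integral>\<^sup>+ \<omega>. ennreal (1 / max (SD2 \<omega>) (RD2 \<omega>)) \<partial>M) = ?J"
      using nn_integral_indep_pair[OF ind(1) distr(1) refl inv_max]
        nn_integral_indep_pair[OF ind(2) distr(2,3) inv_max] by simp_all
    with \<open>?energy\<close> show ?iid_energy
      by (simp add: mult_2 algebra_simps)
  qed
  ultimately show ?thesis by blast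
qed

end
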